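(* Let $H$ denote the Hilbert transform on $\mathbb{R}$ normalized so that $H(\chi_{(0,1)})(y)=\log\frac{|y|}{|y-1|}$, and let $H^{*}g(x)=\sup_{\epsilon>0}\big|\int_{|x-y|>\epsilon}\frac{g(y)}{x-y}\,dy\big|$ be the associated maximal operator (same normalization). Let $f=\chi_{(0,1)}$. Then there exist constants $m>1$ and $C>0$ such that $$H^{*}(Hf)(x)\ge C\,\frac{\log x}{x}\qquad\text{for all }x>m.$$ *)

theory Defs
  imports "HOL-Analysis.Analysis"
begin

definition hilbert_trunc :: "(real \<Rightarrow> real) \<Rightarrow> real \<Rightarrow> real \<Rightarrow> real" where
  "hilbert_trunc g eps x = (LINT y:{y. \<bar>x - y\<bar> > eps}|lborel. g y / (x - y))"

definition hilbert :: "(real \<Rightarrow> real) \<Rightarrow> real \<Rightarrow> real" where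
  "hilbert g x = Lim (at_right 0) (\<lambda>eps. hilbert_trunc g eps x)"

definition hilbert_max :: "(real \<Rightarrow> real) \<Rightarrow> real \<Rightarrow> ereal" where
  "hilbert_max g x = (SUP eps\<in>{0<..}. ereal \<bar>hilbert_trunc g eps x\<bar>)"

end

theory Submission imports Defs begin

(*
  Off [0,1] the principal value is attained for small eps, so
  h(y) = H(chi_(0,1))(y) = ln|y| - ln|y - 1|.  For large x we use the single
  truncation level eps = x + 1, whose integration region is
  R = (-inf,-1) union (2x+1, inf), lying entirely off [0,1].  There the
  integrand h(y)/(x - y) is integrable (it is O(1/y^2)), it is nonpositive on
  both components, and on (-x,-1) it is at most 1/(4xy), whose integral is
  -ln x/(4x).  Hence the truncated transform at level x + 1 has absolute value
  at least ln x/(4x), and the maximal operator dominates every truncation.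
*)

lemma interval_integral_cauchy_kernel:
  fixes a b y :: real
  assumes "a < b" and "y < a \<or> y > b"
  shows "(LINT t:{a<..<b}|lborel. 1 / (y - t)) = ln \<bar>y - a\<bar> - ln \<bar>y - b\<bar>"
proof -
  have "(LBINT t=ereal a..ereal b. 1 / (y - t)) = ln \<bar>y - a\<bar> - ln \<bar>y - b\<bar>"
  proof (cases "y < a")
    case True
    have "(LBINT t=ereal a..ereal b. 1 / (y - t)) = (\<lambda>t. - ln (t - y)) b - (\<lambda>t. - ln (t - y)) a"
      by (rule interval_integral_FTC_finite)
        (use True \<open>a < b\<close> in \<open>auto intro!: continuous_intros derivative_eq_intros
           simp flip: has_real_derivative_iff_has_vector_derivative simp: field_simps\<close>)
    then show ?thesis using True \<open>a < b\<close> by simp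
  next
    case False
    then have "y > b" using assms by auto
    have "(LBINT t=ereal a..ereal b. 1 / (y - t)) = (\<lambda>t. - ln (y - t)) b - (\<lambda>t. - ln (y - t)) a"
      by (rule interval_integral_FTC_finite)
        (use \<open>y > b\<close> \<open>a < b\<close> in \<open>auto intro!: continuous_intros derivative_eq_intros
           simp flip: has_real_derivative_iff_has_vector_derivative simp: field_simps\<close>)
    then show ?thesis using \<open>y > b\<close> \<open>a < b\<close> by simp
  qed
  then show ?thesis using \<open>a < b\<close> by (simp add: interval_lebesgue_integral_def)
qed

text \<open>Off the closed interval the truncations are eventually constant, so the
  principal value exists and equals the logarithmic expression.\<close>
lemma hilbert_indicator_interval:
  fixes a b y :: real
  assumes "a < b" and "y < a \<or> y > b"
  shows "hilbert (indicator {a<..<b}) y = ln \<bar>y - a\<bar> - ln \<bar>y - b\<bar>"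
proof -
  define d where "d = (if y < a then a - y else y - b)"
  have "d > 0" using assms by (auto simp: d_def)
  have trunc_eq: "hilbert_trunc (indicator {a<..<b}) eps y = ln \<bar>y - a\<bar> - ln \<bar>y - b\<bar>"
    if "0 < eps" "eps < d" for eps
  proof -
    have "hilbert_trunc (indicator {a<..<b}) eps y = (LINT t:{a<..<b}|lborel. 1 / (y - t))"
      unfolding hilbert_trunc_def set_lebesgue_integral_def
      by (rule Bochner_Integration.integral_cong)
        (use that assms in \<open>auto simp: d_def indicator_def split: if_splits\<close>)
    then show ?thesis using interval_integral_cauchy_kernel[OF assms] by simp
  qed
  have "eventually (\<lambda>eps. hilbert_trunc (indicator {a<..<b}) eps y = ln \<bar>y - a\<bar> - ln \<bar>y - b\<bar>)
          (at_right 0)"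
    unfolding eventually_at_right[OF \<open>d > 0\<close>] using trunc_eq \<open>d > 0\<close> by blast
  then have "((\<lambda>eps. hilbert_trunc (indicator {a<..<b}) eps y) \<longlongrightarrow> ln \<bar>y - a\<bar> - ln \<bar>y - b\<bar>)
               (at_right 0)"
    by (rule tendsto_eventually)
  then show ?thesis unfolding hilbert_def by (intro tendsto_Lim) auto
qed

lemma hilbert_trunc_le_hilbert_max:
  assumes "eps > 0"
  shows "ereal \<bar>hilbert_trunc g eps x\<bar> \<le> hilbert_max g x"
  unfolding hilbert_max_def using assms by (intro SUP_upper) auto

lemma log_kernel_neg_upper:
  fixes y :: real assumes "y < 0"
  shows "ln \<bar>y\<bar> - ln \<bar>y - 1\<bar> \<le> - 1 / (1 - y)"
proof -
  have "ln \<bar>y\<bar> - ln \<bar>y - 1\<bar> = ln (-y) - ln (1 - y)" using assms by simp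
  also have "\<dots> = ln ((-y) / (1 - y))" using assms by (subst ln_div) auto
  also have "\<dots> \<le> (-y) / (1 - y) - 1"
    using assms by (intro ln_le_minus_one) (auto intro!: divide_neg_pos)
  also have "\<dots> = - 1 / (1 - y)" using assms by (simp add: field_simps)
  finally show ?thesis .
qed

lemma log_kernel_neg_abs:
  fixes y :: real assumes "y < 0"
  shows "\<bar>ln \<bar>y\<bar> - ln \<bar>y - 1\<bar>\<bar> \<le> 1 / (-y)"
proof -
  have "ln \<bar>y\<bar> - ln \<bar>y - 1\<bar> = - (ln (1 - y) - ln (-y))" using assms by simp
  also have "\<dots> = - ln ((1 - y) / (-y))" using assms by (subst ln_div) auto
  also have "(1 - y) / (-y) = 1 + 1 / (-y)" using assms by (simp add: field_simps)
  finally have eq: "ln \<bar>y\<bar> - ln \<bar>y - 1\<bar> = - ln (1 + 1 / (-y))" .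
  have "ln (1 + 1 / (-y)) \<le> 1 / (-y)" using assms by (intro ln_add_one_self_le_self) auto
  moreover have "ln (1 + 1 / (-y)) \<ge> 0" using assms by auto
  ultimately show ?thesis using eq by simp
qed

lemma log_kernel_right:
  fixes y :: real assumes "y > 1"
  shows "0 < ln \<bar>y\<bar> - ln \<bar>y - 1\<bar>" and "ln \<bar>y\<bar> - ln \<bar>y - 1\<bar> \<le> 1 / (y - 1)"
proof -
  have "ln \<bar>y\<bar> - ln \<bar>y - 1\<bar> = ln y - ln (y - 1)" using assms by simp
  also have "\<dots> = ln (y / (y - 1))" using assms by (subst ln_div) auto
  also have "y / (y - 1) = 1 + 1 / (y - 1)" using assms by (simp add: field_simps)
  finally have eq: "ln \<bar>y\<bar> - ln \<bar>y - 1\<bar> = ln (1 + 1 / (y - 1))" .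
  show "0 < ln \<bar>y\<bar> - ln \<bar>y - 1\<bar>" unfolding eq using assms by (intro ln_gt_zero) simp
  show "ln \<bar>y\<bar> - ln \<bar>y - 1\<bar> \<le> 1 / (y - 1)"
    unfolding eq using assms by (intro ln_add_one_self_le_self) auto
qed

lemma inverse_square_integrable_off_unit:
  "set_integrable lborel {y::real. 1 \<le> \<bar>y\<bar>} (\<lambda>y. 1 / y^2)"
proof -
  have "(\<lambda>y::real. 1 / y ^ 2) integrable_on {1..}"
    using has_integral_inverse_power_to_inf[of 2 1] unfolding integrable_on_def by auto
  then have "(\<lambda>y::real. 1 / y ^ 2) absolutely_integrable_on {1..}"
    by (subst absolutely_integrable_on_iff_nonneg) auto
  then have right: "integrable lborel (\<lambda>y::real. indicator {1..} y * (1 / y^2))"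
    unfolding set_integrable_def by (subst (asm) integrable_completion) auto
  have left: "integrable lborel (\<lambda>y::real. indicator {1..} (-y) * (1 / (-y)^2))"
    using right by (subst (asm) lborel_integrable_real_affine_iff[of "-1" _ 0, symmetric]) auto
  have "integrable lborel (\<lambda>y::real. indicator {1..} y * (1 / y^2) + indicator {1..} (-y) * (1 / (-y)^2))"
    using right left by (rule Bochner_Integration.integrable_add)
  also have "(\<lambda>y::real. indicator {1..} y * (1 / y^2) + indicator {1..} (-y) * (1 / (-y)^2)) =
             (\<lambda>y. indicator {y::real. 1 \<le> \<bar>y\<bar>} y *\<^sub>R (1 / y^2))"
    by (auto simp: indicator_def abs_if fun_eq_iff)
  finally show ?thesis unfolding set_integrable_def .
qed

lemma far_integrand_bound:
  fixes x y :: real assumes "x > 2" and "x + 1 < \<bar>x - y\<bar>"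
  shows "\<bar>(ln \<bar>y\<bar> - ln \<bar>y - 1\<bar>) / (x - y)\<bar> \<le> 4 * (1 / y^2)"
proof -
  consider "y < -1" | "y > 2 * x + 1" using assms by (cases "y \<le> x") auto
  then show ?thesis
  proof cases
    case 1
    have "\<bar>(ln \<bar>y\<bar> - ln \<bar>y - 1\<bar>) / (x - y)\<bar> = \<bar>ln \<bar>y\<bar> - ln \<bar>y - 1\<bar>\<bar> / (x - y)"
      using 1 assms by (simp add: abs_div)
    also have "\<dots> \<le> (1 / (-y)) / (-y)"
      using 1 assms log_kernel_neg_abs[of y] by (intro frac_le) auto
    also have "\<dots> = 1 / y^2" using 1 by (simp add: field_simps power2_eq_square)
    also have "\<dots> \<le> 4 * (1 / y^2)" by (simp add: divide_right_mono)
    finally show ?thesis .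
  next
    case 2
    have "1 / (y - 1) \<le> 2 / y" using 2 assms by (simp add: field_simps)
    then have kernel_le: "ln \<bar>y\<bar> - ln \<bar>y - 1\<bar> \<le> 2 / y"
      using 2 assms log_kernel_right(2)[of y] by linarith
    have "\<bar>(ln \<bar>y\<bar> - ln \<bar>y - 1\<bar>) / (x - y)\<bar> = (ln \<bar>y\<bar> - ln \<bar>y - 1\<bar>) / (y - x)"
      using 2 assms log_kernel_right(1)[of y] by (simp add: abs_div abs_minus_commute)
    also have "\<dots> \<le> (2 / y) / (y / 2)"
      using 2 assms kernel_le by (intro frac_le) auto
    also have "\<dots> = 4 * (1 / y^2)" using 2 assms by (simp add: field_simps power2_eq_square)
    finally show ?thesis .
  qed
qed

lemma far_integrand_le:
  fixes x y :: real assumes "x > 2" and "x + 1 < \<bar>x - y\<bar>"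
  shows "(ln \<bar>y\<bar> - ln \<bar>y - 1\<bar>) / (x - y) \<le> indicator {-x<..<-1} y * (1 / (4 * x * y))"
proof -
  consider "y < -1" | "y > 2 * x + 1" using assms by (cases "y \<le> x") auto
  then show ?thesis
  proof cases
    case 1
    have kernel: "ln \<bar>y\<bar> - ln \<bar>y - 1\<bar> \<le> - 1 / (1 - y)"
      using 1 by (intro log_kernel_neg_upper) auto
    show ?thesis
    proof (cases "y > -x")
      case False
      have "- 1 / (1 - y) < 0" using 1 by (intro divide_neg_pos) auto
      then have "(ln \<bar>y\<bar> - ln \<bar>y - 1\<bar>) / (x - y) \<le> 0"
        using kernel 1 assms by (intro divide_nonpos_pos) auto
      then show ?thesis using False by simp
    next
      case True
      have "- 1 / (1 - y) \<le> - 1 / (2 * (-y))" using 1 by (simp add: field_simps)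
      then have "ln \<bar>y\<bar> - ln \<bar>y - 1\<bar> \<le> - 1 / (2 * (-y))" using kernel by linarith
      then have "(ln \<bar>y\<bar> - ln \<bar>y - 1\<bar>) / (x - y) \<le> (- 1 / (2 * (-y))) / (x - y)"
        using 1 assms by (intro divide_right_mono) auto
      also have "\<dots> \<le> (- 1 / (2 * (-y))) / (2 * x)"
        using 1 True assms by (intro divide_left_mono_neg) (auto simp: field_simps)
      also have "\<dots> = 1 / (4 * x * y)" using 1 assms by (simp add: field_simps)
      finally show ?thesis using 1 True by simp
    qed
  next
    case 2
    have "(ln \<bar>y\<bar> - ln \<bar>y - 1\<bar>) / (x - y) \<le> 0"
      using 2 assms log_kernel_right(1)[of y] by (intro divide_nonneg_neg) auto
    then show ?thesis using 2 assms by simp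
  qed
qed

lemma comparison_integral:
  fixes x :: real assumes "x > 1"
  shows "set_integrable lborel {-x<..<-1} (\<lambda>y. 1 / (4 * x * y))"
    and "(LINT y:{-x<..<-1}|lborel. 1 / (4 * x * y)) = - ln x / (4 * x)"
proof -
  have "continuous_on {-x..-1} (\<lambda>y. 1 / (4 * x * y))"
    using assms by (auto intro!: continuous_intros)
  then show "set_integrable lborel {-x<..<-1} (\<lambda>y. 1 / (4 * x * y))"
    by (rule set_integrable_subset[OF borel_integrable_atLeastAtMost']) auto
  have "(LBINT y=ereal (-x)..ereal (-1). 1 / (4 * x * y)) =
      (\<lambda>y. ln (-y) / (4 * x)) (-1) - (\<lambda>y. ln (-y) / (4 * x)) (-x)"
    by (rule interval_integral_FTC_finite)
      (use assms in \<open>auto intro!: continuous_intros derivative_eq_intros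
           simp flip: has_real_derivative_iff_has_vector_derivative simp: field_simps\<close>)
  then show "(LINT y:{-x<..<-1}|lborel. 1 / (4 * x * y)) = - ln x / (4 * x)"
    using assms by (simp add: interval_lebesgue_integral_def)
qed

text \<open>At level x + 1 the truncated transform of h is a Lebesgue integral over the
  region off [0,1]; comparing with 1/(4xy) on (-x,-1) gives the upper bound.\<close>
lemma hilbert_trunc_far_upper:
  fixes x :: real assumes "x > 2"
  shows "hilbert_trunc (hilbert (indicator {0<..<1})) (x + 1) x \<le> - ln x / (4 * x)"
proof -
  define R where "R = {y::real. x + 1 < \<bar>x - y\<bar>}"
  define \<phi> where "\<phi> y = (ln \<bar>y\<bar> - ln \<bar>y - 1\<bar>) / (x - y)" for y :: real
  have R_off_interval: "y < 0 \<or> y > 1" if "y \<in> R" for y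
    using that assms by (auto simp: R_def)
  have R_meas: "R \<in> sets lborel" unfolding R_def by measurable
  have trunc_eq: "hilbert_trunc (hilbert (indicator {0<..<1})) (x + 1) x = (LINT y:R|lborel. \<phi> y)"
    unfolding hilbert_trunc_def R_def[symmetric]
    by (rule set_lebesgue_integral_cong[OF R_meas])
      (auto simp: \<phi>_def hilbert_indicator_interval R_off_interval)
  have "set_integrable lborel R \<phi>"
  proof (rule set_integrable_bound[OF _ _ AE_I2])
    have "set_integrable lborel {y::real. 1 \<le> \<bar>y\<bar>} (\<lambda>y. 4 * (1 / y^2))"
      using inverse_square_integrable_off_unit by (intro set_integrable_mult_right)
    then show "set_integrable lborel R (\<lambda>y. 4 * (1 / y^2))"
      by (rule set_integrable_subset) (use R_meas assms in \<open>auto simp: R_def\<close>)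
    show "set_borel_measurable lborel R \<phi>"
      unfolding set_borel_measurable_def \<phi>_def using R_meas by measurable
    show "y \<in> R \<longrightarrow> norm (\<phi> y) \<le> norm (4 * (1 / y^2))" for y
      using far_integrand_bound[OF assms, of y] by (auto simp: R_def \<phi>_def)
  qed
  moreover have "indicator R y *\<^sub>R \<phi> y \<le> indicator {-x<..<-1} y *\<^sub>R (1 / (4 * x * y))" for y
  proof (cases "y \<in> R")
    case True
    then show ?thesis using far_integrand_le[OF assms, of y] by (simp add: R_def \<phi>_def)
  next
    case False
    then have "y \<notin> {-x<..<-1}" by (auto simp: R_def)
    then show ?thesis using False by simp
  qed
  ultimately have "(LINT y:R|lborel. \<phi> y) \<le> (LINT y:{-x<..<-1}|lborel. 1 / (4 * x * y))"
    using comparison_integral(1)[of x] assms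
    unfolding set_lebesgue_integral_def set_integrable_def by (intro integral_mono) auto
  then show ?thesis using trunc_eq comparison_integral(2)[of x] assms by simp
qed

theorem mainTheorem8:
  shows "\<exists>m>1. \<exists>C>0. \<forall>x>m.
    ereal (C * ln x / x) \<le> hilbert_max (hilbert (indicator {0<..<1})) x"
proof (rule exI[of _ 2], intro conjI exI[of _ "1/4"] allI impI)
  fix x :: real assume "x > 2"
  have "hilbert_trunc (hilbert (indicator {0<..<1})) (x + 1) x \<le> - (1 / 4 * ln x / x)"
    using hilbert_trunc_far_upper[OF \<open>x > 2\<close>] by simp
  then have "1 / 4 * ln x / x \<le> \<bar>hilbert_trunc (hilbert (indicator {0<..<1})) (x + 1) x\<bar>"
    by linarith
  then have "ereal (1 / 4 * ln x / x) \<le> ereal \<bar>hilbert_trunc (hilbert (indicator {0<..<1})) (x + 1) x\<bar>"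
    by simp
  also have "\<dots> \<le> hilbert_max (hilbert (indicator {0<..<1})) x"
    using \<open>x > 2\<close> by (intro hilbert_trunc_le_hilbert_max) simp
  finally show "ereal (1 / 4 * ln x / x) \<le> hilbert_max (hilbert (indicator {0<..<1})) x"
    by simp
qed simp_all

end
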